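(* Let $P_n$ be the path graph on vertices $1,2,\dots,n$ (edges $\{i,i+1\}$, $1\le i<n$), and consider the averaging process on $P_n$ started at the endpoint vector $v(0)=e_1$. For every fixed $\epsilon\in(0,1)$, the time $\min\{t\in\mathbb N:\mathbb E\|v(t)-\bar v\|_1\le\epsilon\}$ is $\Theta_\epsilon(n^3)$; i.e., it lies between $c_\epsilon n^3$ and $C_\epsilon n^3$ for constants $0<c_\epsilon\le C_\epsilon$ depending only on $\epsilon$.
   Context: The averaging process on a finite, undirected, connected graph $G=(V,E)$, $V=\{1,\dots,n\}$: the state vector $v(t)\in\mathbb R^n$, $t=0,1,2,\dots$, starts from a given $v(0)$; at each step $t\ge 1$ an edge $\{i,j\}\in E$ is chosen uniformly at random (independently of all previous choices) and both $v_i$ and $v_j$ are replaced by $(v_i+v_j)/2$, all other coordinates unchanged. Here $\bar v=\frac1n\mathbf 1$ and $e_1$ is the first standard basis vector. *)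

theory Defs
  imports Complex_Main
begin

text \<open>Path graph P_n on vertices 1..n; edge number i (1 <= i < n) is {i, i+1}.
  State vectors are functions nat => real, only coordinates 1..n matter.\<close>

definition path_edges :: "nat \<Rightarrow> nat set" where
  "path_edges n = {1..<n}"

definition avg_step :: "nat \<Rightarrow> (nat \<Rightarrow> real) \<Rightarrow> (nat \<Rightarrow> real)" where
  "avg_step i v = v(i := (v i + v (Suc i)) / 2, Suc i := (v i + v (Suc i)) / 2)"

definition run_avg :: "nat list \<Rightarrow> (nat \<Rightarrow> real) \<Rightarrow> (nat \<Rightarrow> real)" where
  "run_avg es v = foldl (\<lambda>w i. avg_step i w) v es"

definition e1 :: "nat \<Rightarrow> real" where
  "e1 = (\<lambda>j. if j = 1 then 1 else 0)"

definition dist1_bar :: "nat \<Rightarrow> (nat \<Rightarrow> real) \<Rightarrow> real" where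
  "dist1_bar n v = (\<Sum>j\<in>{1..n}. \<bar>v j - 1 / real n\<bar>)"

text \<open>All possible edge sequences of length t (each equally likely, probability (n-1)^(-t)).\<close>
definition edge_seqs :: "nat \<Rightarrow> nat \<Rightarrow> nat list set" where
  "edge_seqs n t = {es. set es \<subseteq> path_edges n \<and> length es = t}"

definition exp_dist :: "nat \<Rightarrow> nat \<Rightarrow> real" where
  "exp_dist n t = (\<Sum>es\<in>edge_seqs n t. dist1_bar n (run_avg es e1)) / real (card (path_edges n)) ^ t"

definition mix_time :: "nat \<Rightarrow> real \<Rightarrow> nat" where
  "mix_time n \<epsilon> = (LEAST t. exp_dist n t \<le> \<epsilon>)"

end

theory Submission
  imports Defs "HOL-Analysis.Convex"
begin

(* Lower bound: the second moment of the mass about the endpoint, sum of (j - 1)^2 v_j, grows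
   by at most 1/(n - 1) per step in expectation.  Before time n^3/512 Chebyshev's inequality
   therefore keeps most of the mass within distance about n/4 of vertex 1, so the l1 distance
   to the uniform vector is still at least 1.

   Upper bound: a step along edge {i, i+1} lowers the squared l2 distance Y to the uniform
   vector by (v_i - v_(i+1))^2/2, so Y drops in expectation by D/(2(n - 1)), D the Dirichlet
   form of the path.  A Nash-type inequality Y^3 <= 128 D for probability vectors and Jensen's
   inequality give y(t+1) <= y(t) - y(t)^3/(256(n - 1)) for y(t) = E Y, hence
   t y(t)^2 <= 128 (n - 1); Cauchy-Schwarz, ||x||_1^2 <= n ||x||_2^2, turns this into
   t (E ||v(t) - vbar||_1)^4 <= 128 n^3. *)

definition prob_vec :: "nat \<Rightarrow> (nat \<Rightarrow> real) \<Rightarrow> bool" where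
  "prob_vec n v \<longleftrightarrow> (\<forall>j\<in>{1..n}. 0 \<le> v j) \<and> (\<Sum>j=1..n. v j) = 1"

definition average :: "'a set \<Rightarrow> ('a \<Rightarrow> real) \<Rightarrow> real" where
  "average S f = (\<Sum>x\<in>S. f x) / real (card S)"

definition expect :: "nat \<Rightarrow> (nat \<Rightarrow> real) \<Rightarrow> nat \<Rightarrow> ((nat \<Rightarrow> real) \<Rightarrow> real) \<Rightarrow> real" where
  "expect n v\<^sub>0 t F = average (edge_seqs n t) (\<lambda>es. F (run_avg es v\<^sub>0))"

definition second_moment :: "nat \<Rightarrow> (nat \<Rightarrow> real) \<Rightarrow> real" where
  "second_moment n v = (\<Sum>j=1..n. (real j - 1)^2 * v j)"

definition dist2_bar :: "nat \<Rightarrow> (nat \<Rightarrow> real) \<Rightarrow> real" where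
  "dist2_bar n v = (\<Sum>j=1..n. (v j - 1 / real n)^2)"

definition dirichlet :: "nat \<Rightarrow> (nat \<Rightarrow> real) \<Rightarrow> real" where
  "dirichlet n v = (\<Sum>i\<in>path_edges n. (v i - v (Suc i))^2)"

lemma average_add: "average S (\<lambda>x. f x + g x) = average S f + average S g"
  by (simp add: average_def sum.distrib add_divide_distrib)

lemma average_diff: "average S (\<lambda>x. f x - g x) = average S f - average S g"
  by (simp add: average_def sum_subtractf diff_divide_distrib)

lemma average_mult_left: "average S (\<lambda>x. c * f x) = c * average S f"
  by (simp add: average_def sum_distrib_left)

lemma average_const: "finite S \<Longrightarrow> S \<noteq> {} \<Longrightarrow> average S (\<lambda>_. c) = c"
  by (simp add: average_def)

lemma average_mono: "(\<And>x. x \<in> S \<Longrightarrow> f x \<le> g x) \<Longrightarrow> average S f \<le> average S g"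
  unfolding average_def by (intro divide_right_mono sum_mono) auto

lemma average_reindex: "inj_on h S \<Longrightarrow> average (h ` S) f = average S (\<lambda>x. f (h x))"
  by (simp add: average_def sum.reindex card_image)

lemma average_Times:
  assumes "finite A" "finite B"
  shows "average (A \<times> B) f = average A (\<lambda>a. average B (\<lambda>b. f (a, b)))"
  using assms
  by (simp add: average_def card_cartesian_product sum_divide_distrib sum.cartesian_product
      mult.commute)

lemma average_convex:
  assumes "finite S" "S \<noteq> {}" "convex_on C \<phi>" "\<And>x. x \<in> S \<Longrightarrow> f x \<in> C"
  shows "\<phi> (average S f) \<le> average S (\<lambda>x. \<phi> (f x))"
proof -
  have "\<phi> (\<Sum>x\<in>S. (1 / real (card S)) *\<^sub>R f x) \<le> (\<Sum>x\<in>S. (1 / real (card S)) * \<phi> (f x))"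
    using assms by (intro convex_on_sum) auto
  then show ?thesis by (simp add: average_def sum_divide_distrib)
qed

lemma run_avg_snoc: "run_avg (es @ [i]) v = avg_step i (run_avg es v)"
  by (simp add: run_avg_def)

lemma sum_avg_step:
  fixes g :: "nat \<Rightarrow> real \<Rightarrow> real"
  assumes "i \<in> path_edges n"
  shows "(\<Sum>j=1..n. g j (avg_step i v j)) = (\<Sum>j=1..n. g j (v j))
    + g i ((v i + v (Suc i)) / 2) + g (Suc i) ((v i + v (Suc i)) / 2)
    - g i (v i) - g (Suc i) (v (Suc i))"
proof -
  have i: "1 \<le> i" "Suc i \<le> n" using assms by (auto simp: path_edges_def)
  have "(\<Sum>j=1..n. g j (avg_step i v j) - g j (v j))
      = (\<Sum>j\<in>{i, Suc i}. g j (avg_step i v j) - g j (v j))"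
    by (rule sum.mono_neutral_right) (use i in \<open>auto simp: avg_step_def\<close>)
  then show ?thesis by (simp add: sum_subtractf avg_step_def)
qed

lemma prob_vec_avg_step:
  assumes "prob_vec n v" "i \<in> path_edges n"
  shows "prob_vec n (avg_step i v)"
proof -
  have "(\<Sum>j=1..n. avg_step i v j) = (\<Sum>j=1..n. v j)"
    using sum_avg_step[OF assms(2), of "\<lambda>_ x. x" v] by simp
  with assms show ?thesis by (auto simp: prob_vec_def avg_step_def path_edges_def)
qed

lemma prob_vec_run_avg:
  assumes "prob_vec n v" "set es \<subseteq> path_edges n"
  shows "prob_vec n (run_avg es v)"
  using assms(2)
proof (induction es rule: rev_induct)
  case Nil
  then show ?case using assms(1) by (simp add: run_avg_def)
next
  case (snoc i es)
  then show ?case by (simp add: run_avg_snoc prob_vec_avg_step)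
qed

lemma prob_vec_pos: "prob_vec n v \<Longrightarrow> 0 < n"
  by (cases n) (auto simp: prob_vec_def)

lemma prob_vec_e1: "1 \<le> n \<Longrightarrow> prob_vec n e1"
  by (simp add: prob_vec_def e1_def sum.delta)

lemma finite_edge_seqs: "finite (edge_seqs n t)"
  unfolding edge_seqs_def path_edges_def by (rule finite_lists_length_eq) simp

lemma edge_seqs_nonempty: "2 \<le> n \<Longrightarrow> edge_seqs n t \<noteq> {}"
  by (auto simp: edge_seqs_def path_edges_def intro!: exI[of _ "replicate t 1"])

lemma edge_seqs_Suc:
  "edge_seqs n (Suc t) = (\<lambda>(es, i). es @ [i]) ` (edge_seqs n t \<times> path_edges n)"
proof
  show "(\<lambda>(es, i). es @ [i]) ` (edge_seqs n t \<times> path_edges n) \<subseteq> edge_seqs n (Suc t)"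
    by (auto simp: edge_seqs_def)
next
  show "edge_seqs n (Suc t) \<subseteq> (\<lambda>(es, i). es @ [i]) ` (edge_seqs n t \<times> path_edges n)"
  proof
    fix xs assume xs: "xs \<in> edge_seqs n (Suc t)"
    then have "xs \<noteq> []" by (auto simp: edge_seqs_def)
    moreover from xs have "butlast xs \<in> edge_seqs n t"
      by (auto simp: edge_seqs_def dest: in_set_butlastD)
    moreover from xs \<open>xs \<noteq> []\<close> have "last xs \<in> path_edges n"
      by (auto simp: edge_seqs_def)
    ultimately show "xs \<in> (\<lambda>(es, i). es @ [i]) ` (edge_seqs n t \<times> path_edges n)"
      by (auto intro!: image_eqI[where x="(butlast xs, last xs)"])
  qed
qed

lemma exp_dist_eq_expect: "exp_dist n t = expect n e1 t (dist1_bar n)"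
proof -
  have "card (edge_seqs n t) = card (path_edges n) ^ t"
    unfolding edge_seqs_def by (rule card_lists_length_eq) (simp add: path_edges_def)
  then show ?thesis by (simp add: exp_dist_def expect_def average_def)
qed

lemma expect_0: "expect n v\<^sub>0 0 F = F v\<^sub>0"
  by (simp add: expect_def average_def edge_seqs_def run_avg_def)

lemma expect_Suc:
  "expect n v\<^sub>0 (Suc t) F = expect n v\<^sub>0 t (\<lambda>v. average (path_edges n) (\<lambda>i. F (avg_step i v)))"
proof -
  have "inj_on (\<lambda>(es, i). es @ [i]) (edge_seqs n t \<times> path_edges n)"
    by (auto simp: inj_on_def)
  then show ?thesis
    unfolding expect_def edge_seqs_Suc
    by (simp add: average_reindex average_Times finite_edge_seqs path_edges_def run_avg_snoc)
qed

lemma expect_add: "expect n v\<^sub>0 t (\<lambda>v. F v + G v) = expect n v\<^sub>0 t F + expect n v\<^sub>0 t G"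
  by (simp add: expect_def average_add)

lemma expect_diff: "expect n v\<^sub>0 t (\<lambda>v. F v - G v) = expect n v\<^sub>0 t F - expect n v\<^sub>0 t G"
  by (simp add: expect_def average_diff)

lemma expect_mult_left: "expect n v\<^sub>0 t (\<lambda>v. c * F v) = c * expect n v\<^sub>0 t F"
  by (simp add: expect_def average_mult_left)

lemma expect_const: "2 \<le> n \<Longrightarrow> expect n v\<^sub>0 t (\<lambda>_. c) = c"
  by (simp add: expect_def average_const finite_edge_seqs edge_seqs_nonempty)

lemma expect_nonneg: "(\<And>v. 0 \<le> F v) \<Longrightarrow> 0 \<le> expect n v\<^sub>0 t F"
  by (simp add: expect_def average_def sum_nonneg)

lemma expect_mono:
  assumes "prob_vec n v\<^sub>0" "\<And>v. prob_vec n v \<Longrightarrow> F v \<le> G v"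
  shows "expect n v\<^sub>0 t F \<le> expect n v\<^sub>0 t G"
  unfolding expect_def
  by (rule average_mono) (auto intro: assms(2) prob_vec_run_avg[OF assms(1)] simp: edge_seqs_def)

lemma expect_convex:
  assumes "2 \<le> n" "convex_on C \<phi>" "\<And>v. F v \<in> C"
  shows "\<phi> (expect n v\<^sub>0 t F) \<le> expect n v\<^sub>0 t (\<lambda>v. \<phi> (F v))"
  unfolding expect_def
  using assms by (intro average_convex) (auto simp: finite_edge_seqs edge_seqs_nonempty)

section \<open>Lower bound: the second moment about the endpoint\<close>

lemma second_moment_avg_step:
  assumes "i \<in> path_edges n"
  shows "second_moment n (avg_step i v)
    = second_moment n v + (2 * real i - 1) * (v i - v (Suc i)) / 2"
  unfolding second_moment_def
  by (subst sum_avg_step[OF assms, where g="\<lambda>j x. (real j - 1)^2 * x"])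
    (simp add: field_simps power2_eq_square)

lemma sum_odd_weighted_diffs:
  "1 \<le> n \<Longrightarrow> (\<Sum>i=1..<n. (2 * real i - 1) * (v i - v (Suc i)))
    = 2 * (\<Sum>j=1..<n. v j) - v 1 - (2 * real n - 3) * v n"
proof (induction n rule: dec_induct)
  case base
  then show ?case by simp
next
  case (step m)
  then show ?case by (simp add: algebra_simps)
qed

lemma average_second_moment_step_le:
  assumes "prob_vec n v" "2 \<le> n"
  shows "average (path_edges n) (\<lambda>i. second_moment n (avg_step i v))
    \<le> second_moment n v + 1 / real (n - 1)"
proof -
  have "(\<Sum>i\<in>path_edges n. second_moment n (avg_step i v))
      = (\<Sum>i=1..<n. second_moment n v + (2 * real i - 1) * (v i - v (Suc i)) / 2)"
    by (rule sum.cong) (auto simp: path_edges_def second_moment_avg_step)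
  also have "\<dots> = real (n - 1) * second_moment n v
      + (\<Sum>i=1..<n. (2 * real i - 1) * (v i - v (Suc i))) / 2"
    by (simp add: sum.distrib sum_divide_distrib)
  also have "(\<Sum>i=1..<n. (2 * real i - 1) * (v i - v (Suc i)))
      = 2 * (\<Sum>j=1..<n. v j) - v 1 - (2 * real n - 3) * v n"
    using assms(2) by (intro sum_odd_weighted_diffs) auto
  also have "\<dots> \<le> 2"
  proof -
    have "0 \<le> v 1" "0 \<le> v n" using assms by (auto simp: prob_vec_def)
    moreover from this(2) have "0 \<le> (2 * real n - 3) * v n" using assms(2) by simp
    moreover have "(\<Sum>j=1..<n. v j) \<le> (\<Sum>j=1..n. v j)"
      by (rule sum_mono2) (use assms in \<open>auto simp: prob_vec_def\<close>)
    ultimately show ?thesis using assms(1) unfolding prob_vec_def by linarith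
  qed
  finally have "average (path_edges n) (\<lambda>i. second_moment n (avg_step i v))
      \<le> (real (n - 1) * second_moment n v + 1) / real (n - 1)"
    unfolding average_def by (simp add: path_edges_def divide_right_mono)
  also have "\<dots> = second_moment n v + 1 / real (n - 1)"
    using assms(2) by (simp add: field_simps)
  finally show ?thesis .
qed

lemma expect_second_moment_le:
  assumes "prob_vec n v\<^sub>0" "2 \<le> n"
  shows "expect n v\<^sub>0 t (second_moment n) \<le> second_moment n v\<^sub>0 + real t / real (n - 1)"
proof (induction t)
  case 0
  then show ?case by (simp add: expect_0)
next
  case (Suc t)
  have "expect n v\<^sub>0 (Suc t) (second_moment n)
      \<le> expect n v\<^sub>0 t (\<lambda>v. second_moment n v + 1 / real (n - 1))"
    unfolding expect_Suc
    by (rule expect_mono[OF assms(1)]) (rule average_second_moment_step_le[OF _ assms(2)])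
  also have "\<dots> = expect n v\<^sub>0 t (second_moment n) + 1 / real (n - 1)"
    using assms(2) by (simp add: expect_add expect_const)
  also have "\<dots> \<le> second_moment n v\<^sub>0 + real (Suc t) / real (n - 1)"
    using Suc by (simp add: add_divide_distrib)
  finally show ?case .
qed

lemma second_moment_e1: "second_moment n e1 = 0"
  by (auto simp: second_moment_def e1_def intro!: sum.neutral)

lemma tail_mass_le_second_moment:
  assumes "\<And>j. j \<in> {1..n} \<Longrightarrow> 0 \<le> v j" "0 < r"
  shows "(\<Sum>j\<in>{r<..n}. v j) \<le> second_moment n v / real r ^ 2"
proof -
  have "(\<Sum>j\<in>{r<..n}. v j) \<le> (\<Sum>j\<in>{r<..n}. (real j - 1)^2 * v j / real r ^ 2)"
  proof (rule sum_mono)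
    fix j assume j: "j \<in> {r<..n}"
    then have "real r ^ 2 \<le> (real j - 1)^2" by (intro power_mono) auto
    moreover have "0 \<le> v j" using j assms by auto
    ultimately show "v j \<le> (real j - 1)^2 * v j / real r ^ 2"
      using assms(2) by (simp add: field_simps mult_left_mono)
  qed
  also have "\<dots> \<le> second_moment n v / real r ^ 2"
    unfolding second_moment_def sum_divide_distrib[symmetric]
    by (intro divide_right_mono sum_mono2) (use assms in auto)
  finally show ?thesis .
qed

lemma dist1_bar_ge_tail:
  assumes "prob_vec n v" "r \<le> n"
  shows "2 - 2 * real r / real n - 2 * (\<Sum>j\<in>{r<..n}. v j) \<le> dist1_bar n v"
proof -
  have n: "0 < n" using assms(1) by (rule prob_vec_pos)
  have split: "{1..n} = {1..r} \<union> {r<..n}" "{1..r} \<inter> {r<..n} = {}" using assms(2) by auto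
  have head: "(\<Sum>j=1..r. v j) = 1 - (\<Sum>j\<in>{r<..n}. v j)"
    using assms(1) sum.union_disjoint[of "{1..r}" "{r<..n}" v] split by (simp add: prob_vec_def)
  have "(\<Sum>j=1..r. v j - 1 / real n) \<le> (\<Sum>j=1..r. \<bar>v j - 1 / real n\<bar>)"
    by (rule sum_mono) simp
  moreover have "(\<Sum>j\<in>{r<..n}. 1 / real n - v j) \<le> (\<Sum>j\<in>{r<..n}. \<bar>v j - 1 / real n\<bar>)"
    by (rule sum_mono) simp
  moreover have "dist1_bar n v
      = (\<Sum>j=1..r. \<bar>v j - 1 / real n\<bar>) + (\<Sum>j\<in>{r<..n}. \<bar>v j - 1 / real n\<bar>)"
    unfolding dist1_bar_def split(1) by (rule sum.union_disjoint) (use split in auto)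
  moreover have "real (n - r) / real n = 1 - real r / real n"
    using n assms(2) by (simp add: of_nat_diff field_simps)
  ultimately show ?thesis using head by (simp add: sum_subtractf)
qed

lemma exp_dist_ge:
  assumes "2 \<le> n" "1 \<le> r" "r \<le> n"
  shows "2 - 2 * real r / real n - 2 * real t / (real (n - 1) * real r ^ 2) \<le> exp_dist n t"
proof -
  define c where "c = 2 - 2 * real r / real n"
  have e1: "prob_vec n e1" using assms(1) by (intro prob_vec_e1) simp
  have chebyshev: "expect n e1 t (\<lambda>v. c - 2 / real r ^ 2 * second_moment n v)
      \<le> expect n e1 t (dist1_bar n)"
  proof (rule expect_mono[OF e1])
    fix v assume v: "prob_vec n v"
    have "(\<Sum>j\<in>{r<..n}. v j) \<le> second_moment n v / real r ^ 2"
      using v assms(2) by (intro tail_mass_le_second_moment) (auto simp: prob_vec_def)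
    with dist1_bar_ge_tail[OF v assms(3)]
    show "c - 2 / real r ^ 2 * second_moment n v \<le> dist1_bar n v" by (simp add: c_def)
  qed
  have "expect n e1 t (second_moment n) \<le> real t / real (n - 1)"
    using expect_second_moment_le[OF e1 assms(1), of t] by (simp add: second_moment_e1)
  then have "c - 2 / real r ^ 2 * (real t / real (n - 1))
      \<le> c - 2 / real r ^ 2 * expect n e1 t (second_moment n)"
    by (intro diff_left_mono mult_left_mono) auto
  also have "\<dots> = expect n e1 t (\<lambda>v. c - 2 / real r ^ 2 * second_moment n v)"
    by (simp only: expect_diff expect_const[OF assms(1)] expect_mult_left)
  also have "\<dots> \<le> exp_dist n t"
    unfolding exp_dist_eq_expect by (rule chebyshev)
  finally show ?thesis by (simp add: c_def mult.commute)
qed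

lemma chebyshev_tail_term_le:
  assumes "9 \<le> real n" "real n \<le> 4 * real r" "512 * real t < real n ^ 3"
  shows "2 * real t / (real (n - 1) * real r ^ 2) \<le> 9 / 128"
proof -
  have "8 * real n / 9 \<le> real (n - 1)" "(real n / 4) ^ 2 \<le> real r ^ 2"
    using assms(1,2) by (auto simp: of_nat_diff intro!: power_mono)
  then have "(8 * real n / 9) * (real n / 4) ^ 2 \<le> real (n - 1) * real r ^ 2"
    by (intro mult_mono) auto
  then have "real n ^ 3 / 18 \<le> real (n - 1) * real r ^ 2"
    by (simp add: power2_eq_square power3_eq_cube)
  moreover have "0 < real n ^ 3 / 18" using assms(1) by simp
  ultimately have "2 * real t / (real (n - 1) * real r ^ 2) \<le> 2 * real t / (real n ^ 3 / 18)"
    using assms(1,2) by (intro divide_left_mono) (auto simp: zero_less_mult_iff)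
  also have "\<dots> \<le> 9 / 128" using assms(1,3) by (simp add: field_simps)
  finally show ?thesis .
qed

lemma exp_dist_ge_one:
  assumes "2 \<le> n" "512 * real t < real n ^ 3"
  shows "1 \<le> exp_dist n t"
proof (cases "t = 0")
  case True
  have "2 - 2 / real n \<le> exp_dist n 0" using exp_dist_ge[OF assms(1), of 1 0] assms(1) by simp
  moreover have "2 / real n \<le> 1" using assms(1) by simp
  ultimately show ?thesis using True by simp
next
  case False
  have n9: "9 \<le> real n"
  proof (rule ccontr)
    assume "\<not> 9 \<le> real n"
    then have "real n ^ 3 \<le> 8 ^ 3" by (intro power_mono) auto
    with False assms(2) show False by simp
  qed
  define r where "r = n div 4 + 1"
  have "n \<le> 4 * r" "4 * r \<le> n + 4" unfolding r_def by presburger+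
  from this[THEN of_nat_mono[where 'a=real]]
  have r: "real n \<le> 4 * real r" "4 * real r \<le> real n + 4" by simp_all
  have "2 * real r / real n \<le> 1 / 2 + 2 / 9"
    using r n9 by (simp add: field_simps)
  moreover have "2 * real t / (real (n - 1) * real r ^ 2) \<le> 9 / 128"
    using n9 r(1) assms(2) by (rule chebyshev_tail_term_le)
  moreover have "1 \<le> r" "r \<le> n" using assms(1) unfolding r_def by auto
  ultimately show ?thesis using exp_dist_ge[OF assms(1), of r t] by linarith
qed

section \<open>Upper bound: decay of the squared l2 distance\<close>

lemma dist2_bar_avg_step:
  assumes "i \<in> path_edges n"
  shows "dist2_bar n (avg_step i v) = dist2_bar n v - (v i - v (Suc i))^2 / 2"
proof -
  have local_change:
    "s + ((a + b) / 2 - c)^2 + ((a + b) / 2 - c)^2 - (a - c)^2 - (b - c)^2 = s - (a - b)^2 / 2"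
    for s a b c :: real
    by (simp add: field_simps power2_eq_square)
  show ?thesis
    unfolding dist2_bar_def by (subst sum_avg_step[OF assms]) (rule local_change)
qed

lemma average_dist2_bar_step:
  assumes "2 \<le> n"
  shows "average (path_edges n) (\<lambda>i. dist2_bar n (avg_step i v))
    = dist2_bar n v - dirichlet n v / (2 * real (n - 1))"
proof -
  have "(\<Sum>i\<in>path_edges n. dist2_bar n (avg_step i v))
      = (\<Sum>i\<in>path_edges n. dist2_bar n v - (v i - v (Suc i))^2 / 2)"
    by (rule sum.cong) (simp_all add: dist2_bar_avg_step)
  also have "\<dots> = real (n - 1) * dist2_bar n v - dirichlet n v / 2"
    by (simp add: sum_subtractf sum_divide_distrib dirichlet_def path_edges_def)
  finally have "average (path_edges n) (\<lambda>i. dist2_bar n (avg_step i v))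
      = (real (n - 1) * dist2_bar n v - dirichlet n v / 2) / real (n - 1)"
    by (simp add: average_def path_edges_def)
  also have "\<dots> = dist2_bar n v - dirichlet n v / (2 * real (n - 1))"
    using assms by (simp add: field_simps)
  finally show ?thesis .
qed

lemma diff_square_le_dirichlet:
  assumes "k \<in> {1..n}" "l \<in> {1..n}"
  shows "(v k - v l)^2 \<le> \<bar>real k - real l\<bar> * dirichlet n v"
proof -
  have *: "(v a - v b)^2 \<le> real (b - a) * dirichlet n v" if "a \<le> b" "1 \<le> a" "b \<le> n" for a b
  proof -
    have "v a - v b = (\<Sum>i=a..<b. v i - v (Suc i))"
      using sum_Suc_diff'[OF that(1), of v] by (simp add: sum_subtractf)
    then have "(v a - v b)^2 \<le> (\<Sum>i=a..<b. (v i - v (Suc i))^2) * real (b - a)"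
      using sum_squared_le_sum_of_squares[of "\<lambda>i. v i - v (Suc i)" "{a..<b}"] by simp
    also have "\<dots> \<le> dirichlet n v * real (b - a)"
      unfolding dirichlet_def path_edges_def
      by (intro mult_right_mono sum_mono2) (use that in auto)
    finally show ?thesis by (simp add: mult.commute)
  qed
  show ?thesis
  proof (cases "k \<le> l")
    case True
    then show ?thesis using *[of k l] assms by (simp add: of_nat_diff)
  next
    case False
    then show ?thesis using *[of l k] assms by (simp add: of_nat_diff power2_commute)
  qed
qed

lemma ex_nearby_indices:
  assumes "k \<in> {1..n}" "l \<in> {1..n}" "\<rho> \<le> \<bar>real k - real l\<bar>"
  obtains Q where "Q \<subseteq> {1..n}" "\<rho> \<le> real (card Q)"
    "\<And>j. j \<in> Q \<Longrightarrow> \<bar>real j - real k\<bar> < \<rho>"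
proof -
  define q where "q = nat \<lceil>\<rho>\<rceil>"
  have q: "\<rho> \<le> real q" "0 < q \<Longrightarrow> real q - 1 < \<rho>" unfolding q_def by linarith+
  show ?thesis
  proof (cases "k \<le> l")
    case True
    have "q \<le> l - k" using assms(3) True unfolding q_def by (simp add: of_nat_diff)
    then show ?thesis
      using assms q by (intro that[of "{k..<k + q}"]) auto
  next
    case False
    have "q \<le> k - l" using assms(3) False unfolding q_def by (simp add: of_nat_diff)
    show ?thesis
    proof (rule that[of "{k - q<..k}"])
      show "{k - q<..k} \<subseteq> {1..n}" and "\<rho> \<le> real (card {k - q<..k})"
        using assms q \<open>q \<le> k - l\<close> by auto
    next
      fix j assume j: "j \<in> {k - q<..k}"
      then have "0 < q" "Suc k \<le> j + q" by auto
      then have "real (Suc k) \<le> real (j + q)" by (simp only: of_nat_le_iff)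
      then show "\<bar>real j - real k\<bar> < \<rho>" using j q(2)[OF \<open>0 < q\<close>] by auto
    qed
  qed
qed

lemma ex_opposite_sign:
  fixes x :: "nat \<Rightarrow> real"
  assumes "(\<Sum>j=1..n. x j) = 0" "k \<in> {1..n}"
  obtains l where "l \<in> {1..n}" "x l * x k \<le> 0"
proof -
  have "\<exists>l\<in>{1..n}. x l * x k \<le> 0"
  proof (rule ccontr)
    assume "\<not> ?thesis"
    then have "0 < (\<Sum>l=1..n. x l * x k)" using assms(2) by (intro sum_pos) (auto simp: not_le)
    with assms(1) show False by (simp add: sum_distrib_right[symmetric])
  qed
  with that show thesis by blast
qed

lemma half_abs_less_abs_near:
  assumes "k \<in> {1..n}" "j \<in> {1..n}" "\<bar>real k - real j\<bar> * dirichlet n x < (\<bar>x k\<bar> / 2)^2"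
  shows "\<bar>x k\<bar> / 2 < \<bar>x j\<bar>"
proof -
  have "(x k - x j)^2 < (\<bar>x k\<bar> / 2)^2"
    using diff_square_le_dirichlet[OF assms(1,2), of x] assms(3) by linarith
  then have "\<bar>x k - x j\<bar> < \<bar>x k\<bar> / 2"
    using power2_less_imp_less[of "\<bar>x k - x j\<bar>" "\<bar>x k\<bar> / 2"] by simp
  then show ?thesis using abs_triangle_ineq[of "x k - x j" "x j"] by simp
qed

lemma abs_le_abs_diff_if_opposite_sign: "x * y \<le> 0 \<Longrightarrow> \<bar>y\<bar> \<le> \<bar>y - x\<bar>" for x y :: real
  by (auto simp: abs_if mult_le_0_iff)

lemma ex_large_stretch:
  assumes k: "k \<in> {1..n}" and l: "l \<in> {1..n}" and D: "0 < dirichlet n x"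
    and far: "\<bar>x k\<bar> ^ 2 \<le> \<bar>real k - real l\<bar> * dirichlet n x"
  obtains Q where "Q \<subseteq> {1..n}" "\<bar>x k\<bar> ^ 2 / (4 * dirichlet n x) \<le> real (card Q)"
    "\<And>j. j \<in> Q \<Longrightarrow> \<bar>x k\<bar> / 2 < \<bar>x j\<bar>"
proof -
  define \<rho> where "\<rho> = \<bar>x k\<bar> ^ 2 / (4 * dirichlet n x)"
  have "\<rho> \<le> \<bar>real k - real l\<bar> * dirichlet n x / (4 * dirichlet n x)"
    unfolding \<rho>_def using far D by (intro divide_right_mono) auto
  also have "\<dots> \<le> \<bar>real k - real l\<bar>" using D by simp
  finally obtain Q where Q: "Q \<subseteq> {1..n}" "\<rho> \<le> real (card Q)"
    and near: "\<And>j. j \<in> Q \<Longrightarrow> \<bar>real j - real k\<bar> < \<rho>"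
    using ex_nearby_indices[OF k l] by blast
  show thesis
  proof (rule that[OF Q(1) Q(2)[unfolded \<rho>_def]])
    fix j assume j: "j \<in> Q"
    have "\<bar>real k - real j\<bar> * dirichlet n x < \<rho> * dirichlet n x"
      using near[OF j] D by (simp add: abs_minus_commute)
    also have "\<dots> = (\<bar>x k\<bar> / 2)^2" using D by (simp add: \<rho>_def power2_eq_square)
    finally show "\<bar>x k\<bar> / 2 < \<bar>x j\<bar>"
      using k Q(1) j by (intro half_abs_less_abs_near) auto
  qed
qed

text \<open>The zero sum supplies a coordinate l of the opposite sign to x k.  As
  |x k - x l| >= |x k| = M, the Dirichlet form D places l at distance at least M^2/D from k,
  which leaves room for a stretch of coordinates above M/2 of total mass M^3/(8D) <= L.\<close>

lemma abs_cube_le_dirichlet: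
  fixes x :: "nat \<Rightarrow> real"
  assumes sum_zero: "(\<Sum>j=1..n. x j) = 0" and L: "(\<Sum>j=1..n. \<bar>x j\<bar>) \<le> L"
    and k: "k \<in> {1..n}"
  shows "\<bar>x k\<bar> ^ 3 \<le> 8 * L * dirichlet n x"
proof -
  define M where "M = \<bar>x k\<bar>"
  define D where "D = dirichlet n x"
  obtain l where l: "l \<in> {1..n}" "x l * x k \<le> 0" using ex_opposite_sign[OF sum_zero k] .
  have "M^2 \<le> (x k - x l)^2"
    unfolding M_def using abs_le_abs_diff_if_opposite_sign[OF l(2)] by (simp add: abs_le_square_iff)
  also have "\<dots> \<le> \<bar>real k - real l\<bar> * D"
    unfolding D_def by (rule diff_square_le_dirichlet[OF k l(1)])
  finally have far: "M^2 \<le> \<bar>real k - real l\<bar> * D" .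
  show ?thesis
  proof (cases "D = 0")
    case True
    then show ?thesis using far by (simp add: M_def D_def)
  next
    case False
    then have "0 < D" by (simp add: D_def dirichlet_def sum_nonneg order_less_le)
    obtain Q where Q: "Q \<subseteq> {1..n}" "M^2 / (4 * D) \<le> real (card Q)"
      and large: "\<And>j. j \<in> Q \<Longrightarrow> M / 2 < \<bar>x j\<bar>"
      using ex_large_stretch[OF k l(1)] \<open>0 < D\<close> far unfolding M_def D_def by blast
    have "M^2 / (4 * D) * (M / 2) \<le> real (card Q) * (M / 2)"
      using Q(2) by (intro mult_right_mono) (auto simp: M_def)
    also have "\<dots> = (\<Sum>j\<in>Q. M / 2)" by simp
    also have "\<dots> \<le> (\<Sum>j\<in>Q. \<bar>x j\<bar>)" by (rule sum_mono) (rule less_imp_le[OF large])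
    also have "\<dots> \<le> (\<Sum>j=1..n. \<bar>x j\<bar>)" by (rule sum_mono2) (use Q(1) in auto)
    also have "\<dots> \<le> L" by (rule L)
    finally have "M ^ 3 / (8 * D) \<le> L" by (simp add: power2_eq_square power3_eq_cube)
    then show ?thesis using \<open>0 < D\<close> by (simp add: pos_divide_le_eq mult_ac M_def D_def)
  qed
qed

lemma nash_inequality:
  fixes x :: "nat \<Rightarrow> real"
  assumes "(\<Sum>j=1..n. x j) = 0" "(\<Sum>j=1..n. \<bar>x j\<bar>) \<le> L"
  shows "(\<Sum>j=1..n. (x j)^2) ^ 3 \<le> 8 * L ^ 4 * dirichlet n x"
proof (cases "n = 0")
  case True
  then show ?thesis by (simp add: dirichlet_def path_edges_def)
next
  case False
  define M where "M = Max ((\<lambda>j. \<bar>x j\<bar>) ` {1..n})"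
  have "M \<in> (\<lambda>j. \<bar>x j\<bar>) ` {1..n}" unfolding M_def using False by (intro Max_in) auto
  then obtain k where k: "k \<in> {1..n}" "\<bar>x k\<bar> = M" by auto
  have max: "\<bar>x j\<bar> \<le> M" if "j \<in> {1..n}" for j unfolding M_def using that by (intro Max_ge) auto
  have "0 \<le> L" using assms(2) by (meson order_trans sum_nonneg abs_ge_zero)
  have "(\<Sum>j=1..n. (x j)^2) \<le> (\<Sum>j=1..n. M * \<bar>x j\<bar>)"
  proof (rule sum_mono)
    fix j assume "j \<in> {1..n}"
    then have "\<bar>x j\<bar> * \<bar>x j\<bar> \<le> M * \<bar>x j\<bar>" by (intro mult_right_mono max) auto
    then show "(x j)^2 \<le> M * \<bar>x j\<bar>" by (simp add: power2_eq_square)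
  qed
  also have "\<dots> \<le> M * L"
    using k assms(2) by (simp add: sum_distrib_left[symmetric] mult_left_mono)
  finally have "(\<Sum>j=1..n. (x j)^2) ^ 3 \<le> (M * L) ^ 3"
    by (intro power_mono) (simp_all add: sum_nonneg)
  also have "\<dots> = M ^ 3 * L ^ 3" by (simp add: power_mult_distrib)
  also have "\<dots> \<le> (8 * L * dirichlet n x) * L ^ 3"
    using abs_cube_le_dirichlet[OF assms k(1)] k(2) \<open>0 \<le> L\<close> by (intro mult_right_mono) auto
  also have "\<dots> = 8 * L ^ 4 * dirichlet n x" by (simp add: eval_nat_numeral mult_ac)
  finally show ?thesis .
qed

lemma dist2_bar_cube_le_dirichlet:
  assumes "prob_vec n v"
  shows "dist2_bar n v ^ 3 \<le> 128 * dirichlet n v"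
proof -
  define x where "x j = v j - 1 / real n" for j
  have n: "0 < n" using assms by (rule prob_vec_pos)
  have "(\<Sum>j=1..n. x j) = 0" using assms n by (simp add: x_def sum_subtractf prob_vec_def)
  moreover have "(\<Sum>j=1..n. \<bar>x j\<bar>) \<le> (\<Sum>j=1..n. v j + 1 / real n)"
    using assms by (intro sum_mono) (auto simp: x_def prob_vec_def abs_le_iff)
  moreover have "(\<Sum>j=1..n. v j + 1 / real n) = 2"
    using assms n by (simp add: sum.distrib prob_vec_def)
  ultimately have "(\<Sum>j=1..n. (x j)^2) ^ 3 \<le> 8 * 2 ^ 4 * dirichlet n x"
    by (intro nash_inequality) auto
  then show ?thesis by (simp add: dist2_bar_def dirichlet_def x_def)
qed

lemma expect_dist2_bar_Suc_le:
  assumes "prob_vec n v\<^sub>0" "2 \<le> n"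
  shows "expect n v\<^sub>0 (Suc t) (dist2_bar n)
    \<le> expect n v\<^sub>0 t (dist2_bar n) - expect n v\<^sub>0 t (dist2_bar n) ^ 3 / (256 * real (n - 1))"
proof -
  define c where "c = 1 / (256 * real (n - 1))"
  have "0 < c" using assms(2) by (simp add: c_def)
  have "expect n v\<^sub>0 (Suc t) (dist2_bar n)
      \<le> expect n v\<^sub>0 t (\<lambda>v. dist2_bar n v - c * dist2_bar n v ^ 3)"
    unfolding expect_Suc
  proof (rule expect_mono[OF assms(1)])
    fix v assume "prob_vec n v"
    then have "dist2_bar n v ^ 3 / 128 \<le> dirichlet n v"
      using dist2_bar_cube_le_dirichlet by (simp add: mult.commute)
    then have "dist2_bar n v ^ 3 / 128 / (2 * real (n - 1)) \<le> dirichlet n v / (2 * real (n - 1))"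
      by (rule divide_right_mono) simp
    then have "c * dist2_bar n v ^ 3 \<le> dirichlet n v / (2 * real (n - 1))"
      by (simp add: c_def)
    then show "average (path_edges n) (\<lambda>i. dist2_bar n (avg_step i v))
        \<le> dist2_bar n v - c * dist2_bar n v ^ 3"
      by (simp add: average_dist2_bar_step assms(2))
  qed
  also have "\<dots> \<le> expect n v\<^sub>0 t (dist2_bar n) - c * expect n v\<^sub>0 t (dist2_bar n) ^ 3"
  proof -
    have "expect n v\<^sub>0 t (dist2_bar n) ^ 3 \<le> expect n v\<^sub>0 t (\<lambda>v. dist2_bar n v ^ 3)"
      using assms(2) convex_power_odd[of 3]
      by (intro expect_convex) (auto simp: dist2_bar_def sum_nonneg)
    then have "c * expect n v\<^sub>0 t (dist2_bar n) ^ 3 \<le> c * expect n v\<^sub>0 t (\<lambda>v. dist2_bar n v ^ 3)"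
      using \<open>0 < c\<close> by (intro mult_left_mono) auto
    then show ?thesis unfolding expect_diff expect_mult_left by linarith
  qed
  finally show ?thesis by (simp add: c_def)
qed

lemma inverse_square_increment:
  fixes a y y' :: real
  assumes "0 < a" "0 \<le> y" "0 < y'" "y' \<le> y - a * y ^ 3"
  shows "1 / y ^ 2 + 2 * a \<le> 1 / y' ^ 2"
proof -
  define u where "u = a * y ^ 2"
  have "0 < y" using assms by (cases "y = 0") auto
  have step: "y' \<le> y * (1 - u)"
    using assms(4) by (simp add: u_def power3_eq_cube power2_eq_square algebra_simps)
  have "0 \<le> u" using assms(1) by (simp add: u_def)
  have "0 < y * (1 - u)" using step assms(3) by linarith
  then have "0 < 1 - u" using \<open>0 < y\<close> by (simp add: zero_less_mult_iff)
  have "y' ^ 2 * (1 + 2 * u) \<le> (y * (1 - u)) ^ 2 * (1 + 2 * u)"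
    using step assms(3) \<open>0 \<le> u\<close> by (intro mult_right_mono power_mono) auto
  also have "\<dots> = y ^ 2 * (1 - u ^ 2 * (3 - 2 * u))" by (simp add: power2_eq_square algebra_simps)
  also have "\<dots> \<le> y ^ 2"
    using \<open>0 < 1 - u\<close> by (intro mult_left_le) (simp_all add: zero_le_mult_iff)
  finally have "y' ^ 2 * (1 + 2 * u) \<le> y ^ 2" .
  then show ?thesis using \<open>0 < y\<close> assms(3) by (simp add: u_def field_simps)
qed

lemma cubic_recurrence_decay:
  fixes y :: "nat \<Rightarrow> real"
  assumes nonneg: "\<And>t. 0 \<le> y t" and "0 < a" and step: "\<And>t. y (Suc t) \<le> y t - a * y t ^ 3"
  shows "2 * a * real t * y t ^ 2 \<le> 1"
proof -
  have "2 * a * real t \<le> 1 / y t ^ 2" if "0 < y t" for t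
    using that
  proof (induction t)
    case 0
    then show ?case by simp
  next
    case (Suc t)
    have "0 \<le> a * y t ^ 3" using \<open>0 < a\<close> nonneg by simp
    then have "0 < y t" using step[of t] Suc.prems by linarith
    moreover have "2 * a * real (Suc t) = 2 * a * real t + 2 * a" by (simp add: algebra_simps)
    ultimately show ?case
      using Suc.IH inverse_square_increment[OF \<open>0 < a\<close> nonneg Suc.prems step] by simp
  qed
  then show ?thesis
    using nonneg[of t] by (cases "y t = 0") (auto simp: field_simps)
qed

lemma dist1_bar_square_le: "dist1_bar n v ^ 2 \<le> real n * dist2_bar n v"
proof -
  have "(\<Sum>j=1..n. \<bar>v j - 1 / real n\<bar>) ^ 2 \<le> (\<Sum>j=1..n. \<bar>v j - 1 / real n\<bar> ^ 2) * real n"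
    using sum_squared_le_sum_of_squares[of "\<lambda>j. \<bar>v j - 1 / real n\<bar>" "{1..n}"] by simp
  then show ?thesis by (simp add: dist1_bar_def dist2_bar_def mult.commute)
qed

lemma exp_dist_pow4_le:
  assumes "2 \<le> n"
  shows "real t * exp_dist n t ^ 4 \<le> 128 * real n ^ 3"
proof -
  define y where "y t = expect n e1 t (dist2_bar n)" for t
  have e1: "prob_vec n e1" using assms by (intro prob_vec_e1) simp
  have "2 * (1 / (256 * real (n - 1))) * real t * y t ^ 2 \<le> 1"
    using assms expect_dist2_bar_Suc_le[OF e1 assms]
    by (intro cubic_recurrence_decay) (auto simp: y_def dist2_bar_def sum_nonneg intro: expect_nonneg)
  then have yt: "real t * y t ^ 2 \<le> 128 * real (n - 1)" using assms by (simp add: field_simps)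
  have "exp_dist n t ^ 2 \<le> expect n e1 t (\<lambda>v. dist1_bar n v ^ 2)"
    unfolding exp_dist_eq_expect using assms convex_power2 by (intro expect_convex) auto
  also have "\<dots> \<le> expect n e1 t (\<lambda>v. real n * dist2_bar n v)"
    by (intro expect_mono[OF e1] dist1_bar_square_le)
  finally have "exp_dist n t ^ 2 \<le> real n * y t" by (simp add: y_def expect_mult_left)
  then have "(exp_dist n t ^ 2) ^ 2 \<le> (real n * y t) ^ 2" by (intro power_mono) auto
  then have "exp_dist n t ^ 4 \<le> real n ^ 2 * y t ^ 2"
    by (simp add: power_mult_distrib flip: power_mult)
  then have "real t * exp_dist n t ^ 4 \<le> real n ^ 2 * (real t * y t ^ 2)"
    by (simp add: mult_left_mono mult.left_commute)
  also have "\<dots> \<le> real n ^ 2 * (128 * real n)" using yt by (intro mult_left_mono) auto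
  finally show ?thesis by (simp add: power2_eq_square power3_eq_cube algebra_simps)
qed

lemma exp_dist_le:
  assumes "2 \<le> n" "0 < \<epsilon>" "128 * real n ^ 3 \<le> \<epsilon> ^ 4 * real t"
  shows "exp_dist n t \<le> \<epsilon>"
proof -
  have "0 < 128 * real n ^ 3" using assms(1) by simp
  then have "0 < \<epsilon> ^ 4 * real t" using assms(3) by linarith
  then have "0 < real t" using assms(2) by (simp add: zero_less_mult_iff)
  moreover have "real t * exp_dist n t ^ 4 \<le> real t * \<epsilon> ^ 4"
    using exp_dist_pow4_le[OF assms(1), of t] assms(3) by (metis mult.commute order_trans)
  ultimately have "exp_dist n t ^ Suc 3 \<le> \<epsilon> ^ Suc 3" by (simp add: mult_le_cancel_left_pos)
  then show ?thesis by (rule power_le_imp_le_base) (use assms(2) in auto)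
qed

lemma mix_time_le:
  assumes "2 \<le> n" "0 < \<epsilon>"
  shows "exp_dist n (mix_time n \<epsilon>) \<le> \<epsilon>"
    and "real (mix_time n \<epsilon>) \<le> (128 / \<epsilon> ^ 4 + 1) * real n ^ 3"
proof -
  define T where "T = nat \<lceil>128 * real n ^ 3 / \<epsilon> ^ 4\<rceil>"
  have "128 * real n ^ 3 / \<epsilon> ^ 4 \<le> real T" unfolding T_def by linarith
  then have T: "exp_dist n T \<le> \<epsilon>"
    using assms(2) by (intro exp_dist_le[OF assms(1)]) (simp_all add: field_simps)
  then show "exp_dist n (mix_time n \<epsilon>) \<le> \<epsilon>" unfolding mix_time_def by (rule LeastI)
  have "mix_time n \<epsilon> \<le> T" unfolding mix_time_def using T by (rule Least_le)
  then have "real (mix_time n \<epsilon>) \<le> real T" by simp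
  also have "\<dots> \<le> 128 * real n ^ 3 / \<epsilon> ^ 4 + 1"
    unfolding T_def using assms(2) by (simp add: of_nat_nat)
  also have "\<dots> \<le> (128 / \<epsilon> ^ 4 + 1) * real n ^ 3"
    using assms(1) by (simp add: algebra_simps)
  finally show "real (mix_time n \<epsilon>) \<le> (128 / \<epsilon> ^ 4 + 1) * real n ^ 3" .
qed

theorem proposition7:
  fixes \<epsilon> :: real
  assumes "0 < \<epsilon>" and "\<epsilon> < 1"
  shows "\<exists>c C. 0 < c \<and> c \<le> C \<and>
           (\<forall>n::nat. n \<ge> 2 \<longrightarrow>
              (\<exists>t. exp_dist n t \<le> \<epsilon>) \<and>
              c * real n ^ 3 \<le> real (mix_time n \<epsilon>) \<and>
              real (mix_time n \<epsilon>) \<le> C * real n ^ 3)"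
proof -
  have "(\<exists>t. exp_dist n t \<le> \<epsilon>) \<and> 1 / 512 * real n ^ 3 \<le> real (mix_time n \<epsilon>)
      \<and> real (mix_time n \<epsilon>) \<le> (128 / \<epsilon> ^ 4 + 1) * real n ^ 3" if n: "2 \<le> n" for n
  proof -
    note mixed = mix_time_le[OF n assms(1)]
    moreover have "\<not> 512 * real (mix_time n \<epsilon>) < real n ^ 3"
      using exp_dist_ge_one[OF n] mixed(1) assms(2) by force
    ultimately show ?thesis by auto
  qed
  moreover have "1 / 512 \<le> 128 / \<epsilon> ^ 4 + 1" using assms(1) by simp
  ultimately show ?thesis by (intro exI[of _ "1 / 512"] exI[of _ "128 / \<epsilon> ^ 4 + 1"]) auto
qed

end
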